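(* The $b$-coupled spin-oscillator $(M,Z,\omega,F=(L,H))$ is a $b$-integrable system; in particular $\{L,H\}=0$ on all of $M$.
   Context: Fix constants $\rho_1,\rho_2>0$. Let $M=S^2\times\mathbb R^2$, where $S^2\subset\mathbb R^3$ is the unit sphere with coordinates $(x,y,z)$, $x^2+y^2+z^2=1$, and $(u,v)$ are coordinates on $\mathbb R^2$; let $Z=\{z=0\}\times\mathbb R^2$. On $\{|z|<1\}$ use cylindrical coordinates $(\theta,z)$ with $\theta=\arg(x+iy)$; on $\{z\neq0\}$ use $(x,y)$ as coordinates on each open hemisphere. The $b$-symplectic form is $\omega=-\rho_1\,\omega^b_{S^2}+\rho_2\,du\wedge dv$, where $\omega^b_{S^2}=d\theta\wedge\frac{dz}{z}$ on $\{|z|<1\}$ and $\omega^b_{S^2}=\frac{1}{1-x^2-y^2}dx\wedge dy$ on $\{z\ne0\}$. The $b$-coupled spin-oscillator is $F=(L,H)$ with $L=\rho_1\log|z|+\frac{\rho_2}{2}(u^2+v^2)$ and $H=\frac12(xu+yv)$. A $b$-integrable system on a $2n$-dimensional $b$-symplectic manifold $(M,Z,\omega)$ (a manifold with a hypersurface $Z$ and a closed nondegenerate 2-form in the $b$-cotangent bundle, i.e. allowing $\frac{dz}{z}$ terms for a defining function $z$ of $Z$) is an $n$-tuple of $b$-functions (functions locally of the form $c\log|z|+g$, $c\in\mathbb R$, $g$ smooth) that pairwise Poisson-commute for the bracket induced by $\omega$ and whose wedge of differentials, as a $b$-form, is nonzero almost everywhere on $M$ and almost everywhere on $Z$. *)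

theory Defs
  imports "HOL-Analysis.Analysis"
begin

text \<open>
  Points of the ambient space R^5 are tuples (x,y,z,u,v); the manifold
  M = S^2 x R^2 is the subset with x^2+y^2+z^2 = 1, and Z = {z = 0}.
  Chart parameters are tuples in R^4.  Functions on M are functions pt => real
  (only their values on M matter).
\<close>

type_synonym pt = "real \<times> real \<times> real \<times> real \<times> real"
type_synonym par = "real \<times> real \<times> real \<times> real"

definition Mset :: "pt set" where
  "Mset = {(x,y,z,u,v). x^2 + y^2 + z^2 = 1}"

definition zc :: "pt \<Rightarrow> real" where
  "zc p = fst (snd (snd p))"

definition Zset :: "pt set" where
  "Zset = {p \<in> Mset. zc p = 0}"

definition cyl :: "par \<Rightarrow> pt" where
  "cyl = (\<lambda>(th,z,u,v). (sqrt (1 - z^2) * cos th, sqrt (1 - z^2) * sin th, z, u, v))"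

definition cyl_dom :: "par set" where
  "cyl_dom = {(th,z,u,v). \<bar>z\<bar> < 1}"

definition hemi :: "real \<Rightarrow> par \<Rightarrow> pt" where
  "hemi s = (\<lambda>(x,y,u,v). (x, y, s * sqrt (1 - x^2 - y^2), u, v))"

definition hemi_dom :: "par set" where
  "hemi_dom = {(x,y,u,v). x^2 + y^2 < 1}"

definition ebas :: "nat \<Rightarrow> par" where
  "ebas i = (if i = 0 then (1,0,0,0) else if i = 1 then (0,1,0,0)
             else if i = 2 then (0,0,1,0) else (0,0,0,1))"

definition pd :: "nat \<Rightarrow> (par \<Rightarrow> real) \<Rightarrow> par \<Rightarrow> real" where
  "pd i F p = deriv (\<lambda>t. F (p + t *\<^sub>R ebas i)) 0"

text \<open>The b-derivative z d/dz in the cylinder chart; on Z (z = 0) it is defined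
  by continuous extension.\<close>
definition bz :: "(par \<Rightarrow> real) \<Rightarrow> par \<Rightarrow> real" where
  "bz F p = (let z = fst (snd p) in
     if z \<noteq> 0 then z * pd 1 F p
     else Lim (at 0) (\<lambda>t. t * pd 1 F (fst p, t, snd (snd p))))"

text \<open>Components of the b-differential of f in the b-coframe
  (d theta, dz/z, du, dv) of the cylinder chart, and of the ordinary
  differential in the coframe (dx, dy, du, dv) of a hemisphere chart.\<close>
definition bdiff_cyl :: "(pt \<Rightarrow> real) \<Rightarrow> par \<Rightarrow> nat \<Rightarrow> real" where
  "bdiff_cyl f p i = (if i = 1 then bz (f \<circ> cyl) p else pd i (f \<circ> cyl) p)"

definition diff_hemi :: "real \<Rightarrow> (pt \<Rightarrow> real) \<Rightarrow> par \<Rightarrow> nat \<Rightarrow> real" where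
  "diff_hemi s f p i = pd i (f \<circ> hemi s) p"

text \<open>Poisson bracket induced by the 2-form a e0/\e1 + b e2/\e3 (in a coframe
  e0..e3) on functions with coframe components df, dg:
  {f,g} = omega(X_f, X_g) with iota_{X_f} omega = - df, i.e.
  {f,g} = (1/a)(df0 dg1 - df1 dg0) + (1/b)(df2 dg3 - df3 dg2).\<close>
definition pb_coframe :: "real \<Rightarrow> real \<Rightarrow> (nat \<Rightarrow> real) \<Rightarrow> (nat \<Rightarrow> real) \<Rightarrow> real" where
  "pb_coframe a b df dg =
     (1/a) * (df 0 * dg 1 - df 1 * dg 0) + (1/b) * (df 2 * dg 3 - df 3 * dg 2)"

text \<open>omega = -rho1 d theta /\ dz/z + rho2 du /\ dv in the cylinder chart;
  omega = -rho1/(1-x^2-y^2) dx /\ dy + rho2 du /\ dv in the hemisphere charts.\<close>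
definition pb_cyl :: "real \<Rightarrow> real \<Rightarrow> (pt \<Rightarrow> real) \<Rightarrow> (pt \<Rightarrow> real) \<Rightarrow> par \<Rightarrow> real" where
  "pb_cyl r1 r2 f g p = pb_coframe (- r1) r2 (bdiff_cyl f p) (bdiff_cyl g p)"

definition pb_hemi :: "real \<Rightarrow> real \<Rightarrow> real \<Rightarrow> (pt \<Rightarrow> real) \<Rightarrow> (pt \<Rightarrow> real) \<Rightarrow> par \<Rightarrow> real" where
  "pb_hemi r1 r2 s f g p =
     pb_coframe (- r1 / (1 - (fst p)^2 - (fst (snd p))^2)) r2 (diff_hemi s f p) (diff_hemi s g p)"

definition wedge_nz :: "(nat \<Rightarrow> real) \<Rightarrow> (nat \<Rightarrow> real) \<Rightarrow> bool" where
  "wedge_nz a b \<longleftrightarrow> (\<exists>i<4. \<exists>j<4. a i * b j - a j * b i \<noteq> 0)"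

fun Ck :: "nat \<Rightarrow> par set \<Rightarrow> (par \<Rightarrow> real) \<Rightarrow> bool" where
  "Ck 0 S g = continuous_on S g"
| "Ck (Suc k) S g = ((\<forall>x\<in>S. g differentiable (at x)) \<and>
                     (\<forall>v. Ck k S (\<lambda>x. frechet_derivative g (at x) v)))"

definition Cinf_on :: "par set \<Rightarrow> (par \<Rightarrow> real) \<Rightarrow> bool" where
  "Cinf_on S g \<longleftrightarrow> (\<forall>k. Ck k S g)"

definition local_b :: "(pt \<Rightarrow> real) \<Rightarrow> (par \<Rightarrow> pt) \<Rightarrow> par set \<Rightarrow> par \<Rightarrow> bool" where
  "local_b f \<phi> D p \<longleftrightarrow> (\<exists>U c g. open U \<and> p \<in> U \<and> U \<subseteq> D \<and> Cinf_on U g \<and>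
       (\<forall>q\<in>U. f (\<phi> q) = c * ln \<bar>zc (\<phi> q)\<bar> + g q))"

definition is_bfun :: "(pt \<Rightarrow> real) \<Rightarrow> bool" where
  "is_bfun f \<longleftrightarrow> (\<forall>p\<in>cyl_dom. local_b f cyl cyl_dom p) \<and>
                 (\<forall>s\<in>{1,-1}. \<forall>p\<in>hemi_dom. local_b f (hemi s) hemi_dom p)"

text \<open>b-integrable system (n = 2) on (M, Z, omega) with omega determined by rho1, rho2:
  b-functions, Poisson-commuting on all of M (every chart; the cylinder chart
  contains Z), wedge of b-differentials nonzero a.e. on M and a.e. on Z.\<close>
definition b_integrable :: "real \<Rightarrow> real \<Rightarrow> (pt \<Rightarrow> real) \<Rightarrow> (pt \<Rightarrow> real) \<Rightarrow> bool" where
  "b_integrable r1 r2 f g \<longleftrightarrow>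
     is_bfun f \<and> is_bfun g \<and>
     (\<forall>p\<in>cyl_dom. pb_cyl r1 r2 f g p = 0) \<and>
     (\<forall>s\<in>{1,-1}. \<forall>p\<in>hemi_dom. pb_hemi r1 r2 s f g p = 0) \<and>
     {p \<in> cyl_dom. \<not> wedge_nz (bdiff_cyl f p) (bdiff_cyl g p)} \<in> null_sets lborel \<and>
     (\<forall>s\<in>{1,-1}. {p \<in> hemi_dom. \<not> wedge_nz (diff_hemi s f p) (diff_hemi s g p)} \<in> null_sets lborel) \<and>
     ({(th,u,v). \<not> wedge_nz (bdiff_cyl f (th,0,u,v)) (bdiff_cyl g (th,0,u,v))}
        :: (real \<times> real \<times> real) set) \<in> null_sets lborel"

definition spin_L :: "real \<Rightarrow> real \<Rightarrow> pt \<Rightarrow> real" where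
  "spin_L r1 r2 = (\<lambda>(x,y,z,u,v). r1 * ln \<bar>z\<bar> + r2 / 2 * (u^2 + v^2))"

definition spin_H :: "pt \<Rightarrow> real" where
  "spin_H = (\<lambda>(x,y,z,u,v). (x * u + y * v) / 2)"

end

theory Submission
  imports Defs
begin

text \<open>
  In the cylinder chart the b-differential of \<open>L = \<rho>\<^sub>1 log|z| + \<rho>\<^sub>2 (u\<^sup>2 + v\<^sup>2)/2\<close> in the
  coframe \<open>(d\<theta>, dz/z, du, dv)\<close> is \<open>(0, \<rho>\<^sub>1, \<rho>\<^sub>2 u, \<rho>\<^sub>2 v)\<close>, smooth across \<open>Z\<close>, so
  \<open>{L, H} = \<partial>\<^sub>\<theta>H + u \<partial>\<^sub>vH - v \<partial>\<^sub>uH\<close>, which vanishes because rotating \<open>\<theta>\<close> and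
  \<open>(u, v)\<close> simultaneously leaves \<open>H\<close> invariant; the hemisphere charts give the same
  cancellation in the coordinates \<open>(x, y)\<close>. Both functions are b-functions since their
  smooth parts lie in an algebra of functions closed under differentiation.
  For the rank condition, a combination of two \<open>2 \<times> 2\<close> minors of \<open>(dL, dH)\<close> in the
  cylinder chart equals \<open>\<rho>\<^sub>1 \<surd>(1 - z\<^sup>2)/2\<close> plus a nonnegative term, so \<open>dL \<and> dH \<noteq> 0\<close>
  everywhere on that chart and in particular on \<open>Z\<close>; in a hemisphere chart two minors are
  negative definite quadratic forms, so \<open>dL \<and> dH\<close> vanishes only at \<open>x = y = u = v = 0\<close>.
\<close>

lemma Ck_cong_open:
  assumes "open S" and "\<And>x. x \<in> S \<Longrightarrow> f x = g x" and "Ck k S f"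
  shows "Ck k S g"
  using assms(2,3)
proof (induction k arbitrary: f g)
  case 0
  then show ?case by (simp cong: continuous_on_cong)
next
  case (Suc k)
  have same_derivative: "(f has_derivative D) (at x) \<longleftrightarrow> (g has_derivative D) (at x)"
    if "x \<in> S" for x D
    using has_derivative_transform_within_open[OF _ assms(1) that] Suc.prems(1) by metis
  then have "frechet_derivative f (at x) = frechet_derivative g (at x)" if "x \<in> S" for x
    using that by (simp add: frechet_derivative_def)
  then show ?case
    using Suc.prems(2) same_derivative Suc.IH[of "\<lambda>x. frechet_derivative f (at x) _"]
    by (auto simp: differentiable_def)
qed

lemma Ck_subset: "Ck k S g \<Longrightarrow> T \<subseteq> S \<Longrightarrow> Ck k T g"
  by (induction k arbitrary: g) (auto intro: continuous_on_subset)

lemma Ck_if_derivative_closed: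
  assumes "open S"
    and derivative_closed: "\<And>f. P f \<Longrightarrow>
      \<exists>D. (\<forall>x\<in>S. (f has_derivative D x) (at x)) \<and> (\<forall>v. P (\<lambda>x. D x v))"
    and "P f"
  shows "Ck k S f"
  using \<open>P f\<close>
proof (induction k arbitrary: f)
  case 0
  then obtain D where "\<forall>x\<in>S. (f has_derivative D x) (at x)"
    using derivative_closed by blast
  then show ?case
    by (auto intro!: continuous_at_imp_continuous_on has_derivative_continuous)
next
  case (Suc k)
  then obtain D where D: "\<forall>x\<in>S. (f has_derivative D x) (at x)" "\<forall>v. P (\<lambda>x. D x v)"
    using derivative_closed by blast
  have "Ck k S (\<lambda>x. frechet_derivative f (at x) v)" for v
    using Ck_cong_open[OF assms(1) _ Suc.IH[OF D(2)[rule_format, of v]]] D(1)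
    by (metis frechet_derivative_at)
  with D(1) show ?case by (auto simp: differentiable_def)
qed

lemma open_cyl_dom: "open cyl_dom"
proof -
  have "cyl_dom = {p. \<bar>fst (snd p)\<bar> < 1}" by (auto simp: cyl_dom_def)
  also have "open \<dots>" by (intro open_Collect_less continuous_intros)
  finally show ?thesis .
qed

text \<open>\<open>1 / \<surd>(1 - z\<^sup>2)\<close> is a generator only so that the class is closed under
  differentiation (it appears in the derivatives of \<open>\<surd>(1 - z\<^sup>2)\<close>).\<close>

inductive cyl_smooth :: "(par \<Rightarrow> real) \<Rightarrow> bool" where
  const: "cyl_smooth (\<lambda>p. c)"
| coord_th: "cyl_smooth (\<lambda>p. fst p)"
| coord_z: "cyl_smooth (\<lambda>p. fst (snd p))"
| coord_u: "cyl_smooth (\<lambda>p. fst (snd (snd p)))"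
| coord_v: "cyl_smooth (\<lambda>p. snd (snd (snd p)))"
| cos_th: "cyl_smooth (\<lambda>p. cos (fst p))"
| sin_th: "cyl_smooth (\<lambda>p. sin (fst p))"
| sqrt_z: "cyl_smooth (\<lambda>p. sqrt (1 - (fst (snd p))^2))"
| inverse_sqrt_z: "cyl_smooth (\<lambda>p. 1 / sqrt (1 - (fst (snd p))^2))"
| add: "cyl_smooth f \<Longrightarrow> cyl_smooth g \<Longrightarrow> cyl_smooth (\<lambda>p. f p + g p)"
| mult: "cyl_smooth f \<Longrightarrow> cyl_smooth g \<Longrightarrow> cyl_smooth (\<lambda>p. f p * g p)"

lemma cyl_smooth_has_derivative:
  assumes "cyl_smooth f"
  shows "\<exists>D. (\<forall>x\<in>cyl_dom. (f has_derivative D x) (at x)) \<and> (\<forall>v. cyl_smooth (\<lambda>x. D x v))"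
  using assms
proof induction
  case (const c)
  show ?case by (rule exI[of _ "\<lambda>x w. 0"]) (auto intro: cyl_smooth.intros)
next
  case coord_th
  show ?case by (rule exI[of _ "\<lambda>x w. fst w"]) (auto intro!: cyl_smooth.intros derivative_eq_intros)
next
  case coord_z
  show ?case by (rule exI[of _ "\<lambda>x w. fst (snd w)"]) (auto intro!: cyl_smooth.intros derivative_eq_intros)
next
  case coord_u
  show ?case by (rule exI[of _ "\<lambda>x w. fst (snd (snd w))"]) (auto intro!: cyl_smooth.intros derivative_eq_intros)
next
  case coord_v
  show ?case by (rule exI[of _ "\<lambda>x w. snd (snd (snd w))"]) (auto intro!: cyl_smooth.intros derivative_eq_intros)
next
  case cos_th
  let ?D = "\<lambda>(x::par) (w::par). (- fst w) * sin (fst x)"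
  have "((\<lambda>p. cos (fst p)) has_derivative ?D x) (at x)" for x :: par
    by (auto intro!: derivative_eq_intros)
  moreover have "cyl_smooth (\<lambda>x. ?D x v)" for v
    by (intro cyl_smooth.intros)
  ultimately show ?case by (intro exI[of _ ?D]) blast
next
  case sin_th
  show ?case
    by (rule exI[of _ "\<lambda>x w. fst w * cos (fst x)"])
      (auto intro!: cyl_smooth.intros derivative_eq_intros)
next
  case sqrt_z
  let ?D = "\<lambda>(x::par) (w::par). (- fst (snd w)) * fst (snd x) * (1 / sqrt (1 - (fst (snd x))^2))"
  have "((\<lambda>p. sqrt (1 - (fst (snd p))^2)) has_derivative ?D x) (at x)" if "x \<in> cyl_dom" for x
  proof -
    from that have "(fst (snd x))^2 < 1" by (auto simp: cyl_dom_def abs_square_less_1)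
    then show ?thesis by (auto intro!: derivative_eq_intros simp: fun_eq_iff field_simps)
  qed
  moreover have "cyl_smooth (\<lambda>x. ?D x v)" for v
    by (intro cyl_smooth.intros)
  ultimately show ?case by (intro exI[of _ ?D]) blast
next
  case inverse_sqrt_z
  let ?r = "\<lambda>x. 1 / sqrt (1 - (fst (snd x))^2)"
  let ?D = "\<lambda>(x::par) (w::par). fst (snd w) * fst (snd x) * ?r x * ?r x * ?r x"
  have "((\<lambda>p. 1 / sqrt (1 - (fst (snd p))^2)) has_derivative ?D x) (at x)" if "x \<in> cyl_dom" for x
  proof -
    from that have "(fst (snd x))^2 < 1" by (auto simp: cyl_dom_def abs_square_less_1)
    then show ?thesis by (auto intro!: derivative_eq_intros simp: fun_eq_iff field_simps)
  qed
  moreover have "cyl_smooth (\<lambda>x. ?D x v)" for v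
    by (intro cyl_smooth.intros)
  ultimately show ?case by (intro exI[of _ ?D]) blast
next
  case (add f g)
  then obtain Df Dg where "\<forall>x\<in>cyl_dom. (f has_derivative Df x) (at x)" "\<forall>v. cyl_smooth (\<lambda>x. Df x v)"
    "\<forall>x\<in>cyl_dom. (g has_derivative Dg x) (at x)" "\<forall>v. cyl_smooth (\<lambda>x. Dg x v)" by blast
  then show ?case
    by (intro exI[of _ "\<lambda>x w. Df x w + Dg x w"]) (auto intro!: cyl_smooth.intros has_derivative_add)
next
  case (mult f g)
  then obtain Df Dg where "\<forall>x\<in>cyl_dom. (f has_derivative Df x) (at x)" "\<forall>v. cyl_smooth (\<lambda>x. Df x v)"
    "\<forall>x\<in>cyl_dom. (g has_derivative Dg x) (at x)" "\<forall>v. cyl_smooth (\<lambda>x. Dg x v)" by blast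
  with mult.hyps show ?case
    by (intro exI[of _ "\<lambda>x w. f x * Dg x w + Df x w * g x"])
      (auto intro!: cyl_smooth.intros has_derivative_mult)
qed

lemma Cinf_on_cyl_smooth: "cyl_smooth g \<Longrightarrow> U \<subseteq> cyl_dom \<Longrightarrow> Cinf_on U g"
  unfolding Cinf_on_def
  using Ck_if_derivative_closed[OF open_cyl_dom cyl_smooth_has_derivative] Ck_subset by blast

lemma open_hemi_dom: "open hemi_dom"
proof -
  have "hemi_dom = {p. (fst p)^2 + (fst (snd p))^2 < 1}" by (auto simp: hemi_dom_def)
  also have "open \<dots>" by (intro open_Collect_less continuous_intros)
  finally show ?thesis .
qed

lemma hemi_dom_subset_cyl_dom: "hemi_dom \<subseteq> cyl_dom"
proof
  fix p :: par
  assume "p \<in> hemi_dom"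
  then have "(fst (snd p))^2 < 1"
    by (auto simp: hemi_dom_def) (smt (verit) zero_le_power2)
  then show "p \<in> cyl_dom" by (auto simp: cyl_dom_def abs_square_less_1)
qed

lemma is_bfunI:
  assumes "cyl_smooth g" and "cyl_smooth h"
    and "\<And>q. q \<in> cyl_dom \<Longrightarrow> f (cyl q) = c * ln \<bar>zc (cyl q)\<bar> + g q"
    and "\<And>s q. q \<in> hemi_dom \<Longrightarrow> f (hemi s q) = c * ln \<bar>zc (hemi s q)\<bar> + h q"
  shows "is_bfun f"
  unfolding is_bfun_def local_b_def
  using assms open_cyl_dom open_hemi_dom hemi_dom_subset_cyl_dom
    Cinf_on_cyl_smooth[of g cyl_dom] Cinf_on_cyl_smooth[of h hemi_dom]
  by blast

lemma is_bfun_spin_L: "is_bfun (spin_L r1 r2)"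
proof (rule is_bfunI)
  let ?g = "\<lambda>p::par. r2 / 2 * (fst (snd (snd p)) * fst (snd (snd p)) + snd (snd (snd p)) * snd (snd (snd p)))"
  show "cyl_smooth ?g" "cyl_smooth ?g" by (intro cyl_smooth.intros)+
  show "spin_L r1 r2 (cyl q) = r1 * ln \<bar>zc (cyl q)\<bar> + ?g q" for q
    by (auto simp: spin_L_def cyl_def zc_def power2_eq_square split: prod.split)
  show "spin_L r1 r2 (hemi s q) = r1 * ln \<bar>zc (hemi s q)\<bar> + ?g q" for s q
    by (auto simp: spin_L_def hemi_def zc_def power2_eq_square split: prod.split)
qed

lemma is_bfun_spin_H: "is_bfun spin_H"
proof (rule is_bfunI[where c = 0])
  let ?g = "\<lambda>p::par. 1 / 2 * (sqrt (1 - (fst (snd p))^2) * cos (fst p) * fst (snd (snd p))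
    + sqrt (1 - (fst (snd p))^2) * sin (fst p) * snd (snd (snd p)))"
  let ?h = "\<lambda>p::par. 1 / 2 * (fst p * fst (snd (snd p)) + fst (snd p) * snd (snd (snd p)))"
  show "cyl_smooth ?g" "cyl_smooth ?h" by (intro cyl_smooth.intros)+
  show "spin_H (cyl q) = 0 * ln \<bar>zc (cyl q)\<bar> + ?g q" for q
    by (auto simp: spin_H_def cyl_def split: prod.split)
  show "spin_H (hemi s q) = 0 * ln \<bar>zc (hemi s q)\<bar> + ?h q" for s q
    by (auto simp: spin_H_def hemi_def split: prod.split)
qed

text \<open>Keeps the simplifier from turning \<open>pd 1\<close> into \<open>pd (Suc 0)\<close>.\<close>

declare One_nat_def [simp del]

lemma pd_eqI: "((\<lambda>t. F (p + t *\<^sub>R ebas i)) has_real_derivative D) (at 0) \<Longrightarrow> pd i F p = D"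
  unfolding pd_def by (rule DERIV_imp_deriv)

lemma bz_eq_continuous_extension:
  assumes "\<bar>z\<bar> < 1"
    and G: "\<And>t. t \<noteq> 0 \<Longrightarrow> \<bar>t\<bar> < 1 \<Longrightarrow> t * pd 1 F (th, t, u, v) = G t"
    and "isCont G 0"
  shows "bz F (th, z, u, v) = G z"
proof (cases "z = 0")
  case False
  with assms show ?thesis by (simp add: bz_def)
next
  case True
  have "\<forall>\<^sub>F t in at 0. G t = t * pd 1 F (th, t, u, v)"
    unfolding eventually_at by (rule exI[of _ 1]) (simp add: G)
  moreover have "(G \<longlongrightarrow> G 0) (at 0)"
    using \<open>isCont G 0\<close> by (simp add: isCont_def)
  ultimately have "((\<lambda>t. t * pd 1 F (th, t, u, v)) \<longlongrightarrow> G 0) (at 0)"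
    by (rule Lim_transform_eventually[rotated])
  with True show ?thesis by (simp add: bz_def tendsto_Lim)
qed

text \<open>\<open>ln (z\<^sup>2)\<close> is differentiable wherever \<open>z \<noteq> 0\<close> without a case split on the sign.\<close>

lemma ln_abs_eq_ln_square: "ln \<bar>x::real\<bar> = ln (x^2) / 2"
  by (cases "x = 0") (use ln_realpow[of "\<bar>x\<bar>" 2] in auto)

lemma spin_L_cyl: "spin_L r1 r2 (cyl (th, z, u, v)) = r1 * (ln (z^2) / 2) + r2 / 2 * (u^2 + v^2)"
  by (simp add: spin_L_def cyl_def ln_abs_eq_ln_square)

lemma spin_H_cyl:
  "spin_H (cyl (th, z, u, v)) = (sqrt (1 - z^2) * cos th * u + sqrt (1 - z^2) * sin th * v) / 2"
  by (simp add: spin_H_def cyl_def algebra_simps)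

lemma spin_L_hemi:
  assumes "s \<in> {1, -1}"
  shows "spin_L r1 r2 (hemi s (x, y, u, v)) = r1 * (ln ((1 - x^2 - y^2)^2) / 4) + r2 / 2 * (u^2 + v^2)"
proof -
  have "\<bar>s * sqrt (1 - x^2 - y^2)\<bar> = sqrt \<bar>1 - x^2 - y^2\<bar>"
    using assms by (auto simp: abs_mult real_sqrt_abs')
  moreover have "ln (sqrt \<bar>a\<bar>) = ln (a^2) / 4" for a :: real
    by (cases "a = 0") (simp_all add: ln_sqrt ln_abs_eq_ln_square)
  ultimately show ?thesis by (simp add: spin_L_def hemi_def)
qed

lemma spin_H_hemi: "spin_H (hemi s (x, y, u, v)) = (x * u + y * v) / 2"
  by (simp add: spin_H_def hemi_def)

lemma bdiff_cyl_eqI: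
  "i \<noteq> 1 \<Longrightarrow> ((\<lambda>t. (f \<circ> cyl) (p + t *\<^sub>R ebas i)) has_real_derivative D) (at 0)
    \<Longrightarrow> bdiff_cyl f p i = D"
  by (simp add: bdiff_cyl_def pd_eqI)

lemma bdiff_cyl_spin_L:
  "bdiff_cyl (spin_L r1 r2) (th, z, u, v) 0 = 0"
  "bdiff_cyl (spin_L r1 r2) (th, z, u, v) 1 = r1"
  "bdiff_cyl (spin_L r1 r2) (th, z, u, v) 2 = r2 * u"
  "bdiff_cyl (spin_L r1 r2) (th, z, u, v) 3 = r2 * v"
proof -
  have pd1: "pd 1 (spin_L r1 r2 \<circ> cyl) (th, t, u, v) = r1 / t" if "t \<noteq> 0" for t
    using that by (intro pd_eqI) (auto simp: ebas_def spin_L_cyl intro!: derivative_eq_intros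
        simp: field_simps power2_eq_square zero_less_mult_iff)
  have "bz (spin_L r1 r2 \<circ> cyl) (th, z, u, v) = r1"
  proof (cases "z = 0")
    case True
    show ?thesis
    proof (rule bz_eq_continuous_extension)
      show "\<bar>z\<bar> < 1" using True by simp
    qed (subst pd1, simp_all)
  next
    case False
    then show ?thesis by (simp add: bz_def pd1)
  qed
  then show "bdiff_cyl (spin_L r1 r2) (th, z, u, v) 1 = r1" by (simp add: bdiff_cyl_def)
  show "bdiff_cyl (spin_L r1 r2) (th, z, u, v) 0 = 0"
    "bdiff_cyl (spin_L r1 r2) (th, z, u, v) 2 = r2 * u"
    "bdiff_cyl (spin_L r1 r2) (th, z, u, v) 3 = r2 * v"
    by (rule bdiff_cyl_eqI;
        auto simp: ebas_def spin_L_cyl intro!: derivative_eq_intros)+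
qed

lemma bdiff_cyl_spin_H:
  assumes "\<bar>z\<bar> < 1"
  shows "bdiff_cyl spin_H (th, z, u, v) 0
      = (sqrt (1 - z^2) * (- sin th) * u + sqrt (1 - z^2) * cos th * v) / 2"
    "bdiff_cyl spin_H (th, z, u, v) 1 = - (z * z / sqrt (1 - z^2)) * (cos th * u + sin th * v) / 2"
    "bdiff_cyl spin_H (th, z, u, v) 2 = sqrt (1 - z^2) * cos th / 2"
    "bdiff_cyl spin_H (th, z, u, v) 3 = sqrt (1 - z^2) * sin th / 2"
proof -
  have pd1: "pd 1 (spin_H \<circ> cyl) (th, t, u, v) = - (t / sqrt (1 - t^2)) * (cos th * u + sin th * v) / 2"
    if "\<bar>t\<bar> < 1" for t
  proof (rule pd_eqI)
    from that have "t^2 < 1" by (simp add: abs_square_less_1)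
    then show "((\<lambda>s. (spin_H \<circ> cyl) ((th, t, u, v) + s *\<^sub>R ebas 1)) has_real_derivative
        - (t / sqrt (1 - t^2)) * (cos th * u + sin th * v) / 2) (at 0)"
      by (auto simp: ebas_def spin_H_cyl intro!: derivative_eq_intros simp: field_simps)
  qed
  have "bz (spin_H \<circ> cyl) (th, z, u, v) = - (z * z / sqrt (1 - z^2)) * (cos th * u + sin th * v) / 2"
    by (rule bz_eq_continuous_extension[OF assms], subst pd1) (auto intro!: continuous_intros)
  then show "bdiff_cyl spin_H (th, z, u, v) 1 = - (z * z / sqrt (1 - z^2)) * (cos th * u + sin th * v) / 2"
    by (simp add: bdiff_cyl_def)
  show "bdiff_cyl spin_H (th, z, u, v) 0
      = (sqrt (1 - z^2) * (- sin th) * u + sqrt (1 - z^2) * cos th * v) / 2"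
    "bdiff_cyl spin_H (th, z, u, v) 2 = sqrt (1 - z^2) * cos th / 2"
    "bdiff_cyl spin_H (th, z, u, v) 3 = sqrt (1 - z^2) * sin th / 2"
    by (rule bdiff_cyl_eqI;
        auto simp: ebas_def spin_H_cyl intro!: derivative_eq_intros)+
qed

lemma diff_hemi_spin_H:
  "diff_hemi s spin_H (x, y, u, v) 0 = u / 2"
  "diff_hemi s spin_H (x, y, u, v) 1 = v / 2"
  "diff_hemi s spin_H (x, y, u, v) 2 = x / 2"
  "diff_hemi s spin_H (x, y, u, v) 3 = y / 2"
  unfolding diff_hemi_def
  by (rule pd_eqI; auto intro!: derivative_eq_intros simp: ebas_def spin_H_hemi)+

lemma diff_hemi_spin_L:
  assumes "s \<in> {1, -1}" and "x^2 + y^2 < 1"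
  shows "diff_hemi s (spin_L r1 r2) (x, y, u, v) 0 = - r1 * x / (1 - x^2 - y^2)"
    "diff_hemi s (spin_L r1 r2) (x, y, u, v) 1 = - r1 * y / (1 - x^2 - y^2)"
    "diff_hemi s (spin_L r1 r2) (x, y, u, v) 2 = r2 * u"
    "diff_hemi s (spin_L r1 r2) (x, y, u, v) 3 = r2 * v"
proof -
  have cancel: "a * ((1 - x^2 - y^2) * b) / (1 - x^2 - y^2)^2 = b * a / (1 - x^2 - y^2)" for a b
    using assms(2) by (simp add: power2_eq_square[of "1 - x^2 - y^2"])
  show "diff_hemi s (spin_L r1 r2) (x, y, u, v) 0 = - r1 * x / (1 - x^2 - y^2)"
    "diff_hemi s (spin_L r1 r2) (x, y, u, v) 1 = - r1 * y / (1 - x^2 - y^2)"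
    "diff_hemi s (spin_L r1 r2) (x, y, u, v) 2 = r2 * u"
    "diff_hemi s (spin_L r1 r2) (x, y, u, v) 3 = r2 * v"
    unfolding diff_hemi_def
    by (rule pd_eqI; simp add: ebas_def spin_L_hemi[OF assms(1)],
        use assms(2) in \<open>auto intro!: derivative_eq_intros simp: cancel\<close>)+
qed

lemma pb_cyl_spin_L_spin_H:
  assumes "r1 \<noteq> 0" and "r2 \<noteq> 0" and "p \<in> cyl_dom"
  shows "pb_cyl r1 r2 (spin_L r1 r2) spin_H p = 0"
proof -
  obtain th z u v where p: "p = (th, z, u, v)" by (cases p) auto
  with assms have "\<bar>z\<bar> < 1" by (simp add: cyl_dom_def)
  with assms show ?thesis
    unfolding p pb_cyl_def pb_coframe_def bdiff_cyl_spin_L bdiff_cyl_spin_H[OF \<open>\<bar>z\<bar> < 1\<close>]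
    by (simp add: field_simps)
qed

lemma pb_hemi_spin_L_spin_H:
  assumes "r1 \<noteq> 0" and "r2 \<noteq> 0" and "s \<in> {1, -1}" and "p \<in> hemi_dom"
  shows "pb_hemi r1 r2 s (spin_L r1 r2) spin_H p = 0"
proof -
  obtain x y u v where p: "p = (x, y, u, v)" by (cases p) auto
  with assms have "x^2 + y^2 < 1" by (simp add: hemi_dom_def)
  define w where "w = 1 - x^2 - y^2"
  have "w \<noteq> 0" using \<open>x^2 + y^2 < 1\<close> by (simp add: w_def)
  with assms show ?thesis
    unfolding p pb_hemi_def pb_coframe_def fst_conv snd_conv
      diff_hemi_spin_L[OF \<open>s \<in> {1, -1}\<close> \<open>x^2 + y^2 < 1\<close>] diff_hemi_spin_H w_def[symmetric]
    by (simp add: field_simps)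
qed

lemma wedge_nz_bdiff_cyl_spin_L_spin_H:
  assumes "r1 > 0" and "r2 > 0" and "p \<in> cyl_dom"
  shows "wedge_nz (bdiff_cyl (spin_L r1 r2) p) (bdiff_cyl spin_H p)"
proof -
  obtain th z u v where p: "p = (th, z, u, v)" by (cases p) auto
  with assms have z: "\<bar>z\<bar> < 1" by (simp add: cyl_dom_def)
  define q where "q = sqrt (1 - z^2)"
  define c s where "c = cos th" and "s = sin th"
  define P where "P = c * u + s * v"
  have "q > 0" using z by (simp add: q_def abs_square_less_1)
  let ?a = "bdiff_cyl (spin_L r1 r2) p" and ?b = "bdiff_cyl spin_H p"
  have "c * (?a 1 * ?b 2 - ?a 2 * ?b 1) + s * (?a 1 * ?b 3 - ?a 3 * ?b 1)
      = r1 * q / 2 * (c^2 + s^2) + r2 * z^2 * P^2 / (2 * q)"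
    using \<open>q > 0\<close>
    unfolding p bdiff_cyl_spin_L bdiff_cyl_spin_H[OF z] q_def[symmetric] c_def[symmetric]
      s_def[symmetric]
    by (simp add: P_def field_simps power2_eq_square)
  also have "\<dots> = r1 * q / 2 + r2 * z^2 * P^2 / (2 * q)"
    by (simp add: c_def s_def)
  also have "\<dots> > 0"
    using assms \<open>q > 0\<close> by (simp add: add_pos_nonneg)
  finally have "?a 1 * ?b 2 - ?a 2 * ?b 1 \<noteq> 0 \<or> ?a 1 * ?b 3 - ?a 3 * ?b 1 \<noteq> 0"
    by auto
  moreover have "(1::nat) < 4" "(2::nat) < 4" "(3::nat) < 4" by simp_all
  ultimately show ?thesis unfolding wedge_nz_def by blast
qed

lemma wedge_nz_diff_hemi_spin_L_spin_H:
  assumes "r1 > 0" and "r2 > 0" and "s \<in> {1, -1}" and "p \<in> hemi_dom" and "p \<noteq> 0"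
  shows "wedge_nz (diff_hemi s (spin_L r1 r2) p) (diff_hemi s spin_H p)"
proof (rule ccontr)
  obtain x y u v where p: "p = (x, y, u, v)" by (cases p) auto
  with assms have xy: "x^2 + y^2 < 1" by (simp add: hemi_dom_def)
  define w where "w = 1 - x^2 - y^2"
  have "w > 0" using xy by (simp add: w_def)
  let ?a = "diff_hemi s (spin_L r1 r2) p" and ?b = "diff_hemi s spin_H p"
  have minors: "?a 0 * ?b 2 - ?a 2 * ?b 0 = - (r1 * x^2 / w + r2 * u^2) / 2"
    "?a 1 * ?b 3 - ?a 3 * ?b 1 = - (r1 * y^2 / w + r2 * v^2) / 2"
    using \<open>w > 0\<close> unfolding p diff_hemi_spin_L[OF assms(3) xy] diff_hemi_spin_H w_def[symmetric]
    by (simp_all add: field_simps power2_eq_square)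
  have vanish: "t = 0 \<and> t' = 0" if "- (r1 * t^2 / w + r2 * t'^2) / 2 = 0" for t t'
  proof -
    have "r1 * t^2 / w \<ge> 0" "r2 * t'^2 \<ge> 0" using assms \<open>w > 0\<close> by simp_all
    moreover have "r1 * t^2 / w + r2 * t'^2 = 0" using that by simp
    ultimately have "r1 * t^2 / w = 0 \<and> r2 * t'^2 = 0" by (simp only: add_nonneg_eq_0_iff)
    with assms \<open>w > 0\<close> show ?thesis by simp
  qed
  assume "\<not> wedge_nz ?a ?b"
  then have "\<forall>i<4. \<forall>j<4. ?a i * ?b j - ?a j * ?b i = 0" unfolding wedge_nz_def by blast
  then have "?a 0 * ?b 2 - ?a 2 * ?b 0 = 0" "?a 1 * ?b 3 - ?a 3 * ?b 1 = 0" by simp_all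
  then have "x = 0 \<and> u = 0" "y = 0 \<and> v = 0" using vanish unfolding minors by blast+
  with p \<open>p \<noteq> 0\<close> show False by (simp add: zero_prod_def)
qed

theorem lemma4p2:
  fixes \<rho>1 \<rho>2 :: real
  assumes "\<rho>1 > 0" and "\<rho>2 > 0"
  shows "b_integrable \<rho>1 \<rho>2 (spin_L \<rho>1 \<rho>2) spin_H"
proof -
  let ?L = "spin_L \<rho>1 \<rho>2"
  have "\<rho>1 \<noteq> 0" "\<rho>2 \<noteq> 0" using assms by simp_all
  have cyl: "{p \<in> cyl_dom. \<not> wedge_nz (bdiff_cyl ?L p) (bdiff_cyl spin_H p)} = {}"
    using wedge_nz_bdiff_cyl_spin_L_spin_H[OF assms] by blast
  have Z: "{(th, u, v). \<not> wedge_nz (bdiff_cyl ?L (th, 0, u, v)) (bdiff_cyl spin_H (th, 0, u, v))} = {}"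
    using wedge_nz_bdiff_cyl_spin_L_spin_H[OF assms] by (force simp: cyl_dom_def)
  have hemi: "{p \<in> hemi_dom. \<not> wedge_nz (diff_hemi s ?L p) (diff_hemi s spin_H p)} \<in> null_sets lborel"
    if "s \<in> {1, -1}" for s
  proof (rule finite_imp_null_set_lborel)
    have "{p \<in> hemi_dom. \<not> wedge_nz (diff_hemi s ?L p) (diff_hemi s spin_H p)} \<subseteq> {0}"
      using wedge_nz_diff_hemi_spin_L_spin_H[OF assms that] by blast
    then show "finite {p \<in> hemi_dom. \<not> wedge_nz (diff_hemi s ?L p) (diff_hemi s spin_H p)}"
      by (rule finite_subset) simp
  qed
  show ?thesis
    unfolding b_integrable_def cyl Z
    by (simp add: is_bfun_spin_L is_bfun_spin_H hemi
        pb_cyl_spin_L_spin_H[OF \<open>\<rho>1 \<noteq> 0\<close> \<open>\<rho>2 \<noteq> 0\<close>]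
        pb_hemi_spin_L_spin_H[OF \<open>\<rho>1 \<noteq> 0\<close> \<open>\<rho>2 \<noteq> 0\<close>])
qed

end
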